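(* Let $G$ be a $P_5$-free graph, let $k\ge 1$, and let $C\subseteq V(G)$ be such that $G[C]$ is connected and contains no clique of size greater than $k$. Let $D\subseteq C$ with $|D|\le k+1$ be such that every vertex of $C$ is in $D$ or has a neighbor in $D$. Let $R\subseteq N(C)$ be such that the vertex set of every connected component of $G[R]$ is a module in $G$. Then $G[R\cup C]$ has a dominating set $\widetilde D$ with $D\subseteq \widetilde D$ and $|\widetilde D\setminus D|\le \max\{k+1,3\}$ (so $|\widetilde D|\le k+1+\max\{k+1,3\}$).
   Context: For $A\subseteq V(G)$, $N(A)$ is the set of vertices outside $A$ with a neighbor in $A$. A dominating set of a graph $F$ is a set $Z\subseteq V(F)$ such that every vertex of $F$ lies in $Z$ or has a neighbor in $Z$. A set $M\subseteq V(G)$ is a module in $G$ if $N(u)\setminus M=N(v)\setminus M$ for all $u,v\in M$. A graph is $P_5$-free if it has no induced path on 5 vertices. *)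

theory Defs
  imports Main
begin

definition graph :: "'a set \<Rightarrow> ('a \<Rightarrow> 'a \<Rightarrow> bool) \<Rightarrow> bool" where
  "graph V E \<longleftrightarrow> finite V \<and> (\<forall>u v. E u v \<longrightarrow> u \<in> V \<and> v \<in> V \<and> u \<noteq> v \<and> E v u)"

definition nbhd :: "'a set \<Rightarrow> ('a \<Rightarrow> 'a \<Rightarrow> bool) \<Rightarrow> 'a set \<Rightarrow> 'a set" where
  "nbhd V E A = {v \<in> V - A. \<exists>a\<in>A. E v a}"

definition connected_on :: "('a \<Rightarrow> 'a \<Rightarrow> bool) \<Rightarrow> 'a set \<Rightarrow> bool" where
  "connected_on E S \<longleftrightarrow> S \<noteq> {} \<and>
     (\<forall>x\<in>S. \<forall>y\<in>S. (\<lambda>u v. u \<in> S \<and> v \<in> S \<and> E u v)\<^sup>*\<^sup>* x y)"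

definition is_clique :: "('a \<Rightarrow> 'a \<Rightarrow> bool) \<Rightarrow> 'a set \<Rightarrow> bool" where
  "is_clique E K \<longleftrightarrow> (\<forall>u\<in>K. \<forall>v\<in>K. u \<noteq> v \<longrightarrow> E u v)"

definition component_of :: "('a \<Rightarrow> 'a \<Rightarrow> bool) \<Rightarrow> 'a set \<Rightarrow> 'a set \<Rightarrow> bool" where
  "component_of E R X \<longleftrightarrow> X \<subseteq> R \<and> connected_on E X \<and>
     (\<forall>Y. X \<subseteq> Y \<and> Y \<subseteq> R \<and> connected_on E Y \<longrightarrow> Y = X)"

definition is_module :: "'a set \<Rightarrow> ('a \<Rightarrow> 'a \<Rightarrow> bool) \<Rightarrow> 'a set \<Rightarrow> bool" where
  "is_module V E M \<longleftrightarrow> M \<subseteq> V \<and>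
     (\<forall>u\<in>M. \<forall>v\<in>M. nbhd V E {u} - M = nbhd V E {v} - M)"

definition dominating :: "('a \<Rightarrow> 'a \<Rightarrow> bool) \<Rightarrow> 'a set \<Rightarrow> 'a set \<Rightarrow> bool" where
  "dominating E S Z \<longleftrightarrow> Z \<subseteq> S \<and> (\<forall>v\<in>S. v \<in> Z \<or> (\<exists>z\<in>Z. E v z))"

definition induced_path :: "'a set \<Rightarrow> ('a \<Rightarrow> 'a \<Rightarrow> bool) \<Rightarrow> 'a list \<Rightarrow> bool" where
  "induced_path V E xs \<longleftrightarrow> distinct xs \<and> set xs \<subseteq> V \<and>
     (\<forall>i<length xs. \<forall>j<length xs. E (xs ! i) (xs ! j) \<longleftrightarrow> (i = j + 1 \<or> j = i + 1))"

definition P5_free :: "'a set \<Rightarrow> ('a \<Rightarrow> 'a \<Rightarrow> bool) \<Rightarrow> bool" where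
  "P5_free V E \<longleftrightarrow> \<not> (\<exists>xs. length xs = 5 \<and> induced_path V E xs)"

end

theory Submission
  imports Defs
begin

text \<open>
  Choose a connected set T \<subseteq> C dominating R of minimum size.  By minimality, every vertex of
  T whose removal keeps G[T] connected has a private neighbour in R, and because the components
  of G[R] are modules, private neighbours of distinct vertices are non-adjacent.  Suppose T
  contains non-adjacent vertices a, b.  Let u be farthest from a and t farthest from u; both are
  non-cut vertices.  If dist(t, u) \<ge> 2, a private neighbour of t followed by a shortest t-u path
  (closed off by a private neighbour of u when the distance is 2) is an induced P5.  If
  dist(t, u) = 1, then u is adjacent to all of T and pa - a - u - b - pb, with pa, pb private
  neighbours, is an induced P5.  Hence T is a clique, |T| \<le> k, and D \<union> T dominates G[R \<union> C].
\<close>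

definition adj_in :: "('a \<Rightarrow> 'a \<Rightarrow> bool) \<Rightarrow> 'a set \<Rightarrow> 'a \<Rightarrow> 'a \<Rightarrow> bool" where
  "adj_in E S = (\<lambda>u v. u \<in> S \<and> v \<in> S \<and> E u v)"

lemma connected_on_iff_adj_in:
  "connected_on E S \<longleftrightarrow> S \<noteq> {} \<and> (\<forall>x\<in>S. \<forall>y\<in>S. (adj_in E S)\<^sup>*\<^sup>* x y)"
  by (simp add: connected_on_def adj_in_def)

lemma graph_sym: "graph V E \<Longrightarrow> E u v \<Longrightarrow> E v u"
  by (simp add: graph_def)

lemma graph_irrefl: "graph V E \<Longrightarrow> \<not> E u u"
  by (auto simp: graph_def)

lemma adj_in_mono:
  assumes "S' \<subseteq> S" "(adj_in E S')\<^sup>*\<^sup>* a b"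
  shows "(adj_in E S)\<^sup>*\<^sup>* a b"
proof -
  have "adj_in E S' x y \<Longrightarrow> adj_in E S x y" for x y
    using \<open>S' \<subseteq> S\<close> by (auto simp: adj_in_def)
  then show ?thesis using mono_rtranclp[of "adj_in E S'" "adj_in E S"] assms(2) by blast
qed

lemma adj_in_rtranclp_sym:
  assumes "graph V E" "(adj_in E S)\<^sup>*\<^sup>* x y"
  shows "(adj_in E S)\<^sup>*\<^sup>* y x"
proof -
  have "symp (adj_in E S)"
    using assms(1) by (auto simp: symp_def adj_in_def graph_def)
  then show ?thesis
    using assms(2) by (metis sympD symp_rtranclp)
qed

lemma connected_on_star:
  assumes "graph V E" "u \<in> S" "\<forall>v\<in>S. v = u \<or> E v u"
  shows "connected_on E S"
  unfolding connected_on_iff_adj_in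
proof (intro conjI ballI)
  show "S \<noteq> {}" using assms(2) by auto
next
  fix x y assume "x \<in> S" "y \<in> S"
  moreover have "(adj_in E S)\<^sup>*\<^sup>* v u" if "v \<in> S" for v
    using assms(2,3) that by (metis adj_in_def r_into_rtranclp rtranclp.rtrancl_refl)
  ultimately show "(adj_in E S)\<^sup>*\<^sup>* x y"
    using adj_in_rtranclp_sym[OF assms(1)] by (metis rtranclp_trans)
qed

subsection \<open>Distance in an induced subgraph\<close>

definition dist_in :: "('a \<Rightarrow> 'a \<Rightarrow> bool) \<Rightarrow> 'a set \<Rightarrow> 'a \<Rightarrow> 'a \<Rightarrow> nat" where
  "dist_in E S a b = (LEAST n. (adj_in E S ^^ n) a b)"

lemma relpowp_dist_in: "(adj_in E S)\<^sup>*\<^sup>* a b \<Longrightarrow> (adj_in E S ^^ dist_in E S a b) a b"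
  unfolding dist_in_def by (metis LeastI_ex rtranclp_power)

lemma dist_in_le: "(adj_in E S ^^ n) a b \<Longrightarrow> dist_in E S a b \<le> n"
  unfolding dist_in_def by (rule Least_le)

lemma dist_in_self [simp]: "dist_in E S a a = 0"
  using dist_in_le[of 0 E S a a] by simp

lemma dist_in_eq_0_iff: "(adj_in E S)\<^sup>*\<^sup>* a b \<Longrightarrow> dist_in E S a b = 0 \<longleftrightarrow> a = b"
  using relpowp_dist_in dist_in_self by fastforce

lemma dist_in_adj_le:
  "adj_in E S a c \<Longrightarrow> (adj_in E S)\<^sup>*\<^sup>* c b \<Longrightarrow> dist_in E S a b \<le> Suc (dist_in E S c b)"
  by (meson relpowp_dist_in dist_in_le relpowp_Suc_I2)

lemma dist_in_SucE:
  assumes "dist_in E S a b = Suc m" "(adj_in E S)\<^sup>*\<^sup>* a b"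
  obtains c where "adj_in E S a c" "dist_in E S c b = m" "(adj_in E S)\<^sup>*\<^sup>* c b"
proof -
  have "(adj_in E S ^^ Suc m) a b"
    using relpowp_dist_in[OF assms(2)] assms(1) by simp
  then obtain c where c: "adj_in E S a c" "(adj_in E S ^^ m) c b"
    using relpowp_Suc_D2 by metis
  have "(adj_in E S)\<^sup>*\<^sup>* c b" using c(2) rtranclp_power by metis
  moreover have "dist_in E S c b = m"
    using dist_in_le[OF c(2)] dist_in_adj_le[OF c(1) \<open>(adj_in E S)\<^sup>*\<^sup>* c b\<close>] assms(1) by simp
  ultimately show thesis using that c(1) by blast
qed

lemma dist_in_le_1:
  assumes "(adj_in E S)\<^sup>*\<^sup>* v u" "dist_in E S v u \<le> 1"
  shows "v = u \<or> adj_in E S v u"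
proof (cases "dist_in E S v u")
  case 0
  then show ?thesis using dist_in_eq_0_iff[OF assms(1)] by simp
next
  case (Suc m)
  with assms(2) have "dist_in E S v u = Suc 0" by simp
  then obtain c where "adj_in E S v c" "dist_in E S c u = 0" "(adj_in E S)\<^sup>*\<^sup>* c u"
    using assms(1) by (rule dist_in_SucE)
  then show ?thesis using dist_in_eq_0_iff by metis
qed

text \<open>Shortest paths to w from other vertices avoid a vertex at maximum distance from w.\<close>

lemma connected_on_Diff_farthest:
  assumes g: "graph V E" and c: "connected_on E T" and "u \<in> T" "w \<in> T" "u \<noteq> w"
    and far: "\<forall>v\<in>T. dist_in E T v w \<le> dist_in E T u w"
  shows "connected_on E (T - {u})"
proof -
  have to_w: "(adj_in E (T - {u}))\<^sup>*\<^sup>* v w"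
    if "v \<in> T" "v \<noteq> u" "dist_in E T v w = n" for v n
    using that
  proof (induction n arbitrary: v)
    case 0
    then show ?case using c \<open>w \<in> T\<close> dist_in_eq_0_iff by (metis connected_on_iff_adj_in rtranclp.rtrancl_refl)
  next
    case (Suc n)
    have "(adj_in E T)\<^sup>*\<^sup>* v w" using c Suc.prems(1) \<open>w \<in> T\<close> by (simp add: connected_on_iff_adj_in)
    then obtain c' where c': "adj_in E T v c'" "dist_in E T c' w = n"
      using dist_in_SucE Suc.prems(3) by metis
    have "c' \<noteq> u" using far Suc.prems c'(2) by fastforce
    then have "adj_in E (T - {u}) v c'" using c'(1) Suc.prems by (auto simp: adj_in_def)
    moreover have "c' \<in> T" using c'(1) by (simp add: adj_in_def)
    ultimately show ?case
      using Suc.IH[OF _ \<open>c' \<noteq> u\<close> c'(2)] by (blast intro: converse_rtranclp_into_rtranclp)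
  qed
  show ?thesis unfolding connected_on_iff_adj_in
  proof (intro conjI ballI)
    show "T - {u} \<noteq> {}" using \<open>w \<in> T\<close> \<open>u \<noteq> w\<close> by auto
  next
    fix x y assume "x \<in> T - {u}" "y \<in> T - {u}"
    then have "(adj_in E (T - {u}))\<^sup>*\<^sup>* x w" "(adj_in E (T - {u}))\<^sup>*\<^sup>* y w" using to_w by auto
    then show "(adj_in E (T - {u}))\<^sup>*\<^sup>* x y" using adj_in_rtranclp_sym[OF g] by (metis rtranclp_trans)
  qed
qed

lemma farthest_non_cutE:
  assumes g: "graph V E" and "finite T" "connected_on E T" "w \<in> T" "x \<in> T" "x \<noteq> w"
  obtains u where "u \<in> T" "u \<noteq> w" "\<forall>v\<in>T. dist_in E T v w \<le> dist_in E T u w"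
    "connected_on E (T - {u})"
proof -
  obtain u where u: "u \<in> T" "\<forall>v\<in>T. dist_in E T v w \<le> dist_in E T u w"
  proof -
    let ?m = "Max ((\<lambda>v. dist_in E T v w) ` T)"
    have "?m \<in> (\<lambda>v. dist_in E T v w) ` T" using assms(2,5) by (intro Max_in) auto
    then obtain u where "u \<in> T" "dist_in E T u w = ?m" by auto
    moreover have "\<forall>v\<in>T. dist_in E T v w \<le> ?m" using assms(2) by simp
    ultimately show thesis using that by metis
  qed
  have "(adj_in E T)\<^sup>*\<^sup>* x w" using assms(3-5) by (simp add: connected_on_iff_adj_in)
  then have "dist_in E T x w \<noteq> 0" using dist_in_eq_0_iff assms(6) by metis
  then have "u \<noteq> w" using u(2) assms(5) dist_in_self[of E T w] by (metis le_zero_eq)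
  with u show thesis using that connected_on_Diff_farthest[OF g assms(3) u(1) assms(4)] by blast
qed

lemma induced_P5_not_P5_free:
  assumes g: "graph V E" and "a \<in> V" "b \<in> V" "c \<in> V" "d \<in> V" "e \<in> V"
    and "distinct [a, b, c, d, e]"
    and e: "E a b" "E b c" "E c d" "E d e"
    and n: "\<not> E a c" "\<not> E a d" "\<not> E a e" "\<not> E b d" "\<not> E b e" "\<not> E c e"
  shows "\<not> P5_free V E"
proof -
  have "induced_path V E [a, b, c, d, e]"
    unfolding induced_path_def
  proof (intro conjI allI impI)
    show "distinct [a, b, c, d, e]" "set [a, b, c, d, e] \<subseteq> V" using assms(2-7) by auto
  next
    fix i j assume "i < length [a, b, c, d, e]" "j < length [a, b, c, d, e]"
    then have i: "i = 0 \<or> i = 1 \<or> i = 2 \<or> i = 3 \<or> i = 4"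
      and j: "j = 0 \<or> j = 1 \<or> j = 2 \<or> j = 3 \<or> j = 4" by auto
    have "E b a" "E c b" "E d c" "E e d" using e graph_sym[OF g] by blast+
    moreover have "\<not> E c a" "\<not> E d a" "\<not> E e a" "\<not> E d b" "\<not> E e b" "\<not> E e c"
      using n graph_sym[OF g] by blast+
    moreover have "\<not> E a a" "\<not> E b b" "\<not> E c c" "\<not> E d d" "\<not> E e e"
      using graph_irrefl[OF g] by blast+
    ultimately show "E ([a, b, c, d, e] ! i) ([a, b, c, d, e] ! j) \<longleftrightarrow> (i = j + 1 \<or> j = i + 1)"
      using i j e n by (elim disjE) simp_all
  qed
  then show ?thesis unfolding P5_free_def by (intro notI exI[of _ "[a, b, c, d, e]"]) simp
qed

subsection \<open>Private neighbours\<close>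

definition private_nbr :: "('a \<Rightarrow> 'a \<Rightarrow> bool) \<Rightarrow> 'a set \<Rightarrow> 'a \<Rightarrow> 'a \<Rightarrow> bool" where
  "private_nbr E T v x \<longleftrightarrow> E v x \<and> (\<forall>t\<in>T - {v}. \<not> E t x)"

lemma private_nbr_nonadj:
  assumes "graph V E" "private_nbr E T v x" "s \<in> T" "s \<noteq> v"
  shows "\<not> E s x" "\<not> E x s"
  using assms(2-4) graph_sym[OF assms(1)] unfolding private_nbr_def by blast+

lemma private_nbrs_nonadj:
  assumes transfer: "\<forall>x\<in>Q. \<forall>y\<in>Q. E x y \<longrightarrow> (\<forall>t\<in>T. E t x \<longrightarrow> E t y)"
    and "v \<in> T" "w \<in> T" "v \<noteq> w" "x \<in> Q" "y \<in> Q"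
    and "private_nbr E T v x" "private_nbr E T w y"
  shows "\<not> E x y"
  using assms unfolding private_nbr_def by blast

lemma not_P5_free_universal:
  assumes g: "graph V E" and "T \<subseteq> V" "a \<in> T" "b \<in> T" "u \<in> T" "a \<noteq> b" "\<not> E a b"
    and univ: "\<forall>v\<in>T. v = u \<or> E v u"
    and pa: "private_nbr E T a pa" and pb: "private_nbr E T b pb"
    and "pa \<in> V - T" "pb \<in> V - T" "\<not> E pa pb"
  shows "\<not> P5_free V E"
proof -
  have "a \<noteq> u" "b \<noteq> u" using univ assms(3,4,6,7) by (auto dest: graph_sym[OF g])
  then have "E a u" "E u b" using univ assms(3,4) graph_sym[OF g] by blast+
  have "pa \<noteq> pb" using pa private_nbr_nonadj(1)[OF g pb assms(3,6)] by (auto simp: private_nbr_def)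
  show ?thesis
  proof (rule induced_P5_not_P5_free[OF g, of pa a u b pb])
    show "distinct [pa, a, u, b, pb]"
      using assms(3-6,11,12) \<open>a \<noteq> u\<close> \<open>b \<noteq> u\<close> \<open>pa \<noteq> pb\<close> by auto
    show "E pa a" "E b pb" using pa pb graph_sym[OF g] by (auto simp: private_nbr_def)
    show "\<not> E pa u" "\<not> E pa b" using private_nbr_nonadj(2)[OF g pa] assms(4,5,6) \<open>a \<noteq> u\<close> by metis+
    show "\<not> E a pb" "\<not> E u pb" using private_nbr_nonadj(1)[OF g pb] assms(3,5,6) \<open>b \<noteq> u\<close> by metis+
  qed (use assms \<open>E a u\<close> \<open>E u b\<close> in auto)
qed

lemma not_P5_free_dist_2:
  assumes g: "graph V E" and "T \<subseteq> V" and c: "connected_on E T" and "t \<in> T" "u \<in> T"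
    and d: "dist_in E T t u = 2"
    and pt: "private_nbr E T t pt" and pu: "private_nbr E T u pu"
    and "pt \<in> V - T" "pu \<in> V - T" "\<not> E pt pu"
  shows "\<not> P5_free V E"
proof -
  have reach: "(adj_in E T)\<^sup>*\<^sup>* t u" using c assms(4,5) by (simp add: connected_on_iff_adj_in)
  moreover have "dist_in E T t u = Suc 1" using d by simp
  ultimately obtain s where s: "adj_in E T t s" "dist_in E T s u = 1" "(adj_in E T)\<^sup>*\<^sup>* s u"
    using dist_in_SucE by metis
  then have "s = u \<or> adj_in E T s u" by (intro dist_in_le_1) auto
  then have "E s u" "s \<in> T" "E t s" using s(1,2) dist_in_self by (auto simp: adj_in_def)
  have "\<not> E t u"
  proof
    assume "E t u"
    then have "dist_in E T t u \<le> Suc (dist_in E T u u)"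
      using assms(4,5) by (intro dist_in_adj_le) (auto simp: adj_in_def)
    then show False using d dist_in_self by simp
  qed
  have "t \<noteq> u" "s \<noteq> t" "s \<noteq> u" using d s(2) dist_in_self[of E T u] by auto
  have "pt \<noteq> pu" using pt private_nbr_nonadj(1)[OF g pu assms(4) \<open>t \<noteq> u\<close>] by (auto simp: private_nbr_def)
  show ?thesis
  proof (rule induced_P5_not_P5_free[OF g, of pt t s u pu])
    show "distinct [pt, t, s, u, pu]"
      using assms(4,5,9,10) \<open>s \<in> T\<close> \<open>t \<noteq> u\<close> \<open>s \<noteq> t\<close> \<open>s \<noteq> u\<close> \<open>pt \<noteq> pu\<close> by auto
    show "E pt t" "E u pu" using pt pu graph_sym[OF g] by (auto simp: private_nbr_def)
    show "\<not> E pt s" "\<not> E pt u"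
      using private_nbr_nonadj(2)[OF g pt] \<open>s \<in> T\<close> assms(5) \<open>s \<noteq> t\<close> \<open>t \<noteq> u\<close> by metis+
    show "\<not> E t pu" "\<not> E s pu"
      using private_nbr_nonadj(1)[OF g pu] \<open>s \<in> T\<close> assms(4) \<open>s \<noteq> u\<close> \<open>t \<noteq> u\<close> by metis+
  qed (use assms \<open>E s u\<close> \<open>E t s\<close> \<open>s \<in> T\<close> \<open>\<not> E t u\<close> in auto)
qed

lemma not_P5_free_dist_ge_3:
  assumes g: "graph V E" and "T \<subseteq> V" and c: "connected_on E T" and "t \<in> T" "u \<in> T"
    and d: "dist_in E T t u \<ge> 3"
    and pt: "private_nbr E T t pt" and "pt \<in> V - T"
  shows "\<not> P5_free V E"
proof -
  have "\<exists>m. dist_in E T t u = Suc (Suc (Suc m))" using d by presburger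
  then obtain m where m: "dist_in E T t u = Suc (Suc (Suc m))" by blast
  have reach: "(adj_in E T)\<^sup>*\<^sup>* t u" using c assms(4,5) by (simp add: connected_on_iff_adj_in)
  obtain s1 where s1: "adj_in E T t s1" "dist_in E T s1 u = Suc (Suc m)" "(adj_in E T)\<^sup>*\<^sup>* s1 u"
    using m reach by (rule dist_in_SucE)
  obtain s2 where s2: "adj_in E T s1 s2" "dist_in E T s2 u = Suc m" "(adj_in E T)\<^sup>*\<^sup>* s2 u"
    using s1(2,3) by (rule dist_in_SucE)
  obtain s3 where s3: "adj_in E T s2 s3" "dist_in E T s3 u = m" "(adj_in E T)\<^sup>*\<^sup>* s3 u"
    using s2(2,3) by (rule dist_in_SucE)
  have in_T: "s1 \<in> T" "s2 \<in> T" "s3 \<in> T" and edges: "E t s1" "E s1 s2" "E s2 s3"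
    using s1(1) s2(1) s3(1) by (auto simp: adj_in_def)
  txt \<open>A chord of the shortest path would shorten it.\<close>
  have chord_free: "\<not> E x y" if "x \<in> T" "y \<in> T" "(adj_in E T)\<^sup>*\<^sup>* y u"
    "Suc (dist_in E T y u) < dist_in E T x u" for x y
    using that dist_in_adj_le[of E T x y u] by (auto simp: adj_in_def)
  have "distinct [t, s1, s2, s3]" using m s1(2) s2(2) s3(2) by auto
  show ?thesis
  proof (rule induced_P5_not_P5_free[OF g, of pt t s1 s2 s3])
    show "distinct [pt, t, s1, s2, s3]" using \<open>distinct [t, s1, s2, s3]\<close> in_T assms(4,8) by auto
    show "\<not> E pt s1" "\<not> E pt s2" "\<not> E pt s3"
      using private_nbr_nonadj(2)[OF g pt] in_T \<open>distinct [t, s1, s2, s3]\<close> by auto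
    show "\<not> E t s2" "\<not> E t s3" "\<not> E s1 s3"
      using chord_free in_T assms(4) m s1 s2 s3 by simp_all
    show "E pt t" using pt graph_sym[OF g] by (auto simp: private_nbr_def)
  qed (use assms in_T edges in auto)
qed

lemma clique_if_private_nbrs:
  assumes g: "graph V E" and p5: "P5_free V E" and "finite T" "T \<subseteq> V" and c: "connected_on E T"
    and "Q \<subseteq> V - T"
    and priv: "\<forall>v\<in>T. connected_on E (T - {v}) \<longrightarrow> (\<exists>x\<in>Q. private_nbr E T v x)"
    and transfer: "\<forall>x\<in>Q. \<forall>y\<in>Q. E x y \<longrightarrow> (\<forall>t\<in>T. E t x \<longrightarrow> E t y)"
  shows "is_clique E T"
  unfolding is_clique_def
proof (rule ccontr)
  assume "\<not> (\<forall>a\<in>T. \<forall>b\<in>T. a \<noteq> b \<longrightarrow> E a b)"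
  then obtain a b where ab: "a \<in> T" "b \<in> T" "a \<noteq> b" "\<not> E a b" by auto
  have reach: "(adj_in E T)\<^sup>*\<^sup>* x y" if "x \<in> T" "y \<in> T" for x y
    using c that by (simp add: connected_on_iff_adj_in)
  obtain u where u: "u \<in> T" "u \<noteq> a" "connected_on E (T - {u})"
    using farthest_non_cutE[OF g assms(3) c ab(1) ab(2)] ab(3) by metis
  then obtain pu where pu: "pu \<in> Q" "private_nbr E T u pu" using priv by blast
  obtain t where t: "t \<in> T" "t \<noteq> u" "\<forall>v\<in>T. dist_in E T v u \<le> dist_in E T t u"
      "connected_on E (T - {t})"
    using farthest_non_cutE[OF g assms(3) c u(1) ab(1) u(2)[symmetric]] by metis
  then obtain pt where pt: "pt \<in> Q" "private_nbr E T t pt" using priv by blast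
  have "\<not> E pt pu" using private_nbrs_nonadj[OF transfer t(1) u(1) t(2) pt(1) pu(1) pt(2) pu(2)] .
  have "pt \<in> V - T" "pu \<in> V - T" using pt(1) pu(1) assms(6) by auto
  have "dist_in E T t u \<noteq> 0" using dist_in_eq_0_iff[OF reach[OF t(1) u(1)]] t(2) by blast
  then consider "dist_in E T t u = 1" | "dist_in E T t u = 2" | "dist_in E T t u \<ge> 3" by linarith
  then show False
  proof cases
    case 1
    have univ: "\<forall>v\<in>T. v = u \<or> E v u"
    proof
      fix v assume "v \<in> T"
      then have "v = u \<or> adj_in E T v u" using t(3) 1 reach u(1) by (intro dist_in_le_1) auto
      then show "v = u \<or> E v u" by (auto simp: adj_in_def)
    qed
    have "b \<noteq> u" using univ ab by (auto dest: graph_sym[OF g])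
    have "connected_on E (T - {a})" "connected_on E (T - {b})"
      using univ u(1,2) \<open>b \<noteq> u\<close> by (auto intro: connected_on_star[OF g, of u])
    then obtain pa pb where pa: "pa \<in> Q" "private_nbr E T a pa" and pb: "pb \<in> Q" "private_nbr E T b pb"
      using priv ab(1,2) by meson
    have "\<not> E pa pb" using private_nbrs_nonadj[OF transfer ab(1,2,3) pa(1) pb(1) pa(2) pb(2)] .
    moreover have "pa \<in> V - T" "pb \<in> V - T" using pa(1) pb(1) assms(6) by auto
    ultimately show False
      using p5 not_P5_free_universal[OF g assms(4) ab(1,2) u(1) ab(3,4) univ pa(2) pb(2)] by blast
  next
    case 2
    with p5 show False
      using not_P5_free_dist_2[OF g assms(4) c t(1) u(1) _ pt(2) pu(2)] \<open>pt \<in> V - T\<close> \<open>pu \<in> V - T\<close>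
        \<open>\<not> E pt pu\<close> by blast
  next
    case 3
    with p5 show False using not_P5_free_dist_ge_3[OF g assms(4) c t(1) u(1) _ pt(2)] \<open>pt \<in> V - T\<close> by blast
  qed
qed

subsection \<open>Modules and minimal connected dominators\<close>

lemma component_of_reachable:
  assumes g: "graph V E" and "x \<in> R"
  shows "component_of E R {v \<in> R. (adj_in E R)\<^sup>*\<^sup>* x v}" (is "component_of E R ?X")
proof -
  have from_x: "(adj_in E ?X)\<^sup>*\<^sup>* x v" if "(adj_in E R)\<^sup>*\<^sup>* x v" for v
    using that
  proof (induction rule: rtranclp_induct)
    case (step a b)
    then have "adj_in E ?X a b"
      using rtranclp.rtrancl_into_rtrancl[OF step(1,2)] by (auto simp: adj_in_def)
    then show ?case using step.IH by (rule rtranclp.rtrancl_into_rtrancl[rotated])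
  qed simp
  have conn: "connected_on E ?X"
    unfolding connected_on_iff_adj_in
  proof (intro conjI ballI)
    show "?X \<noteq> {}" using \<open>x \<in> R\<close> by auto
  next
    fix a b assume "a \<in> ?X" "b \<in> ?X"
    then have "(adj_in E ?X)\<^sup>*\<^sup>* a x" "(adj_in E ?X)\<^sup>*\<^sup>* x b"
      using from_x adj_in_rtranclp_sym[OF g] by blast+
    then show "(adj_in E ?X)\<^sup>*\<^sup>* a b" by (rule rtranclp_trans)
  qed
  have "Y \<subseteq> ?X" if "?X \<subseteq> Y" "Y \<subseteq> R" "connected_on E Y" for Y
  proof
    fix v assume "v \<in> Y"
    then have "(adj_in E Y)\<^sup>*\<^sup>* x v" using that \<open>x \<in> R\<close> by (auto simp: connected_on_iff_adj_in)
    then show "v \<in> ?X" using adj_in_mono[OF \<open>Y \<subseteq> R\<close>] \<open>v \<in> Y\<close> \<open>Y \<subseteq> R\<close> by blast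
  qed
  with conn show ?thesis unfolding component_of_def by blast
qed

lemma module_components_edge:
  assumes g: "graph V E" and modules: "\<forall>X. component_of E R X \<longrightarrow> is_module V E X"
    and "x \<in> R" "y \<in> R" "E x y" "t \<in> V - R" "E t x"
  shows "E t y"
proof -
  let ?X = "{v \<in> R. (adj_in E R)\<^sup>*\<^sup>* x v}"
  have "is_module V E ?X" using modules component_of_reachable[OF g \<open>x \<in> R\<close>] by blast
  moreover have "x \<in> ?X" "y \<in> ?X" using assms(3-5) by (auto simp: adj_in_def)
  ultimately have "nbhd V E {x} - ?X = nbhd V E {y} - ?X" unfolding is_module_def by blast
  moreover have "t \<in> nbhd V E {x} - ?X" using assms(3,6,7) by (auto simp: nbhd_def)
  ultimately show ?thesis by (auto simp: nbhd_def)
qed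

lemma minimal_dominator_private_nbr:
  assumes g: "graph V E" and "finite T" "v \<in> T" "connected_on E (T - {v})"
    and dom: "\<forall>r\<in>R. \<exists>t\<in>T. E r t"
    and min: "\<forall>T'. T' \<subseteq> T \<and> connected_on E T' \<and> (\<forall>r\<in>R. \<exists>t\<in>T'. E r t) \<longrightarrow> card T \<le> card T'"
  shows "\<exists>r\<in>R. private_nbr E T v r"
proof -
  have "card (T - {v}) < card T" using assms(2,3) by (rule card_Diff1_less)
  then have "\<not> (\<forall>r\<in>R. \<exists>t\<in>T - {v}. E r t)" using min assms(4) by (meson Diff_subset not_le)
  then obtain r where "r \<in> R" "\<forall>t\<in>T - {v}. \<not> E r t" by blast
  moreover have "E r v" using dom calculation by blast
  ultimately show ?thesis using graph_sym[OF g] unfolding private_nbr_def by blast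
qed

lemma clique_dominatorE:
  assumes g: "graph V E" and p5: "P5_free V E" and "C \<subseteq> V" "connected_on E C"
    and R: "R \<subseteq> nbhd V E C" and modules: "\<forall>X. component_of E R X \<longrightarrow> is_module V E X"
  obtains T where "T \<subseteq> C" "is_clique E T" "\<forall>r\<in>R. \<exists>t\<in>T. E r t"
proof -
  define P where "P T \<longleftrightarrow> T \<subseteq> C \<and> connected_on E T \<and> (\<forall>r\<in>R. \<exists>t\<in>T. E r t)" for T
  have "P C" using assms(4) R by (auto simp: P_def nbhd_def graph_sym[OF g])
  then obtain T where T: "P T" and min: "\<forall>T'. P T' \<longrightarrow> card T \<le> card T'"
    using ex_has_least_nat[of P C card] by blast
  have "T \<subseteq> C" "connected_on E T" and dom: "\<forall>r\<in>R. \<exists>t\<in>T. E r t" using T by (auto simp: P_def)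
  have "finite T" using finite_subset[of T V] \<open>T \<subseteq> C\<close> assms(3) g by (auto simp: graph_def)
  have "R \<subseteq> V - T" using R \<open>T \<subseteq> C\<close> by (auto simp: nbhd_def)
  have "\<forall>T'. T' \<subseteq> T \<and> connected_on E T' \<and> (\<forall>r\<in>R. \<exists>t\<in>T'. E r t) \<longrightarrow> card T \<le> card T'"
    using min \<open>T \<subseteq> C\<close> unfolding P_def by blast
  then have priv: "\<forall>v\<in>T. connected_on E (T - {v}) \<longrightarrow> (\<exists>r\<in>R. private_nbr E T v r)"
    using minimal_dominator_private_nbr[OF g \<open>finite T\<close> _ _ dom] by blast
  have transfer: "\<forall>x\<in>R. \<forall>y\<in>R. E x y \<longrightarrow> (\<forall>t\<in>T. E t x \<longrightarrow> E t y)"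
  proof (intro ballI impI)
    fix x y t assume "x \<in> R" "y \<in> R" "E x y" "t \<in> T" "E t x"
    moreover have "t \<in> V - R" using \<open>t \<in> T\<close> \<open>T \<subseteq> C\<close> assms(3) \<open>R \<subseteq> V - T\<close> by blast
    ultimately show "E t y" using module_components_edge[OF g modules] by blast
  qed
  have "is_clique E T"
    using clique_if_private_nbrs[OF g p5 \<open>finite T\<close> _ \<open>connected_on E T\<close> \<open>R \<subseteq> V - T\<close> priv transfer]
      \<open>T \<subseteq> C\<close> assms(3) by blast
  with \<open>T \<subseteq> C\<close> dom show thesis using that by blast
qed

theorem claim4p5:
  fixes V :: "'a set" and E :: "'a \<Rightarrow> 'a \<Rightarrow> bool" and k :: nat
    and C D R :: "'a set"
  assumes "graph V E"
    and "P5_free V E"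
    and "k \<ge> 1"
    and "C \<subseteq> V"
    and "connected_on E C"
    and "\<forall>K. K \<subseteq> C \<and> is_clique E K \<longrightarrow> card K \<le> k"
    and "D \<subseteq> C" and "card D \<le> k + 1"
    and "dominating E C D"
    and "R \<subseteq> nbhd V E C"
    and "\<forall>X. component_of E R X \<longrightarrow> is_module V E X"
  shows "\<exists>Dt. dominating E (R \<union> C) Dt \<and> D \<subseteq> Dt \<and> card (Dt - D) \<le> max (k + 1) 3"
proof -
  obtain T where T: "T \<subseteq> C" "is_clique E T" "\<forall>r\<in>R. \<exists>t\<in>T. E r t"
    using clique_dominatorE[OF assms(1,2,4,5,10,11)] .
  have "finite T" using finite_subset[of T V] T(1) assms(1,4) by (auto simp: graph_def)
  have "card (D \<union> T - D) \<le> card T" using \<open>finite T\<close> by (intro card_mono) auto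
  also have "card T \<le> k" using assms(6) T(1,2) by blast
  finally have "card (D \<union> T - D) \<le> max (k + 1) 3" by simp
  moreover have "dominating E (R \<union> C) (D \<union> T)"
    using assms(7,9) T(1,3) unfolding dominating_def by blast
  ultimately show ?thesis by blast
qed

end
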